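(* Let $\alpha\in(0,2]$ and $\nu>0$. Let $X_1,X_2,\ldots$ and $N_1,N_2,\ldots$ be random variables on a common probability space such that each $N_n$ takes only natural values, is independent of $X_1,X_2,\ldots$, and $N_n\to\infty$ in probability. Let $T_n=T_n(X_1,\ldots,X_n)$ be a statistic (a measurable function of $X_1,\ldots,X_n$) that is asymptotically normal, i.e. there exist $\sigma>0$ and $\theta\in\mathbb{R}$ with $$\mathsf{P}\big(\sigma\sqrt{n}(T_n-\theta)<x\big)\to\Phi(x)\quad\text{for all }x\in\mathbb{R},$$ and let $T_{N_n}(\omega)=T_{N_n(\omega)}(X_1(\omega),\ldots,X_{N_n(\omega)}(\omega))$. Then $$\sigma\sqrt{n}\big(T_{N_n}-\theta\big)\Longrightarrow L_{\alpha,\nu}$$ if and only if $$\frac{N_n}{n}\Longrightarrow \tfrac12 M_{\alpha/2,\nu}^{-1}.$$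
   Context: $\Longrightarrow$ denotes convergence in distribution as $n\to\infty$; $\Phi$ is the standard normal distribution function. $L_{\alpha,\nu}$ denotes a random variable with characteristic function $(1+|t|^{\alpha})^{-\nu}$, $t\in\mathbb{R}$. For $\delta\in(0,1]$, $\nu>0$, $M_{\delta,\nu}$ denotes a nonnegative random variable with Laplace transform $(1+s^{\delta})^{-\nu}$, $s\ge0$ (generalized Mittag-Leffler distribution). *)

theory Defs
  imports "HOL-Probability.Probability"
begin

definition std_normal_cdf :: "real \<Rightarrow> real" where
  "std_normal_cdf x = measure (density lborel std_normal_density) {..x}"

definition is_linnik_law :: "real \<Rightarrow> real \<Rightarrow> real measure \<Rightarrow> bool" where
  "is_linnik_law \<alpha> \<nu> L \<longleftrightarrow> real_distribution L \<and>
     (\<forall>t. char L t = complex_of_real ((1 + \<bar>t\<bar> powr \<alpha>) powr (- \<nu>)))"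

definition is_gml_law :: "real \<Rightarrow> real \<Rightarrow> real measure \<Rightarrow> bool" where
  "is_gml_law \<delta> \<nu> G \<longleftrightarrow> real_distribution G \<and> (AE x in G. 0 \<le> x) \<and>
     (\<forall>s\<ge>0. (\<integral>x. exp (- s * x) \<partial>G) = (1 + s powr \<delta>) powr (- \<nu>))"

end

theory Submission
  imports Defs "HOL-Real_Asymp.Real_Asymp"
begin

text \<open>Conditioning on \<open>N\<^sub>n\<close> and using independence,
  \<open>P(\<sigma>\<surd>n(T\<^bsub>N\<^sub>n\<^esub> - \<theta>) \<le> x) = \<Sum>\<^sub>k P(N\<^sub>n = k) P(\<sigma>\<surd>k(T\<^sub>k - \<theta>) \<le> x\<surd>(k/n))\<close>.
  By Polya's theorem the inner probability is uniformly close to \<open>\<Phi>(x\<surd>(k/n))\<close> for large \<open>k\<close>,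
  and \<open>N\<^sub>n \<rightarrow> \<infinity>\<close> in probability, so the randomly indexed statistic is asymptotically distributed
  as the normal scale mixture \<open>Z/\<surd>V\<^sub>n\<close> with \<open>V\<^sub>n = N\<^sub>n/n\<close> independent of \<open>Z\<close>.
  That mixture has characteristic function \<open>E exp(-t\<^sup>2/(2V\<^sub>n))\<close>, and for \<open>U = 1/(2M)\<close> with \<open>M\<close>
  generalized Mittag-Leffler, \<open>E exp(-t\<^sup>2/(2U)) = E exp(-t\<^sup>2 M) = (1 + |t|\<^sup>\<alpha>)\<^sup>-\<^sup>\<nu>\<close>, the Linnik
  characteristic function. By Levy's continuity theorem the theorem thus reduces to:
  \<open>E exp(-t\<^sup>2/(2V\<^sub>n)) \<rightarrow> E exp(-t\<^sup>2/(2U))\<close> for all \<open>t\<close> iff \<open>V\<^sub>n \<Rightarrow> U\<close>. Taking \<open>t\<^sup>2 = 2k\<close>, the left side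
  says that the moments of \<open>h(V\<^sub>n)\<close>, \<open>h(u) = exp(-1/u)\<close>, converge; as \<open>h\<close> maps \<open>(0,\<infinity>)\<close> strictly increasingly
  into \<open>[0,1]\<close>, Weierstrass approximation turns this into weak convergence.\<close>

section \<open>Uniform convergence of distribution functions\<close>

lemma interval_fine_grid:
  fixes a b d :: real
  assumes "a < b" "0 < d"
  obtains m :: nat and p :: "nat \<Rightarrow> real"
  where "p 0 = a" "p m = b" "\<And>j. p j \<in> {a..b}"
    and "\<And>y. y \<in> {a..b} \<Longrightarrow> \<exists>j<m. p j \<le> y \<and> y \<le> p (Suc j) \<and> y - p j < d \<and> p (Suc j) - y < d"
proof
  define h where "h = d/2"
  have h: "h > 0" "h < d" using assms by (auto simp: h_def)
  define p where "p j = min b (a + real j * h)" for j :: nat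
  define m where "m = nat \<lceil>(b-a)/h\<rceil> + 1"
  show "p 0 = a" using assms by (simp add: p_def)
  show "p m = b"
  proof -
    have "(b-a)/h \<le> real m" unfolding m_def by linarith
    then have "b - a \<le> real m * h" using h by (simp add: field_simps)
    then show ?thesis unfolding p_def by simp
  qed
  show "p j \<in> {a..b}" for j using assms h by (simp add: p_def)
  fix y assume y: "y \<in> {a..b}"
  define j where "j = nat \<lfloor>(y-a)/h\<rfloor>"
  have "real j = of_int \<lfloor>(y-a)/h\<rfloor>" unfolding j_def using y h by simp
  then have j: "real j \<le> (y-a)/h" "(y-a)/h < real j + 1" by linarith+
  then have "real j * h \<le> y - a" "y - a < (real j + 1) * h"
    using h by (simp_all add: field_simps)
  then have "p j \<le> y \<and> y \<le> p (Suc j) \<and> y - p j < d \<and> p (Suc j) - y < d"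
    using h y by (auto simp: p_def field_simps)
  moreover have "j < m"
  proof -
    have "(y-a)/h \<le> (b-a)/h" using y h by (simp add: divide_right_mono)
    then show ?thesis using j unfolding m_def by linarith
  qed
  ultimately show "\<exists>j<m. p j \<le> y \<and> y \<le> p (Suc j) \<and> y - p j < d \<and> p (Suc j) - y < d"
    by blast
qed

lemma polya_uniform_convergence:
  fixes F :: "nat \<Rightarrow> real \<Rightarrow> real" and P :: "real \<Rightarrow> real"
  assumes mono_F: "\<And>k. mono (F k)" and F_bounds: "\<And>k y. 0 \<le> F k y \<and> F k y \<le> 1"
    and cont_P: "\<And>y. isCont P y" and P_bounds: "\<And>y. 0 \<le> P y \<and> P y \<le> 1"
    and P_bot: "(P \<longlongrightarrow> 0) at_bot" and P_top: "(P \<longlongrightarrow> 1) at_top"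
    and conv: "\<And>y. (\<lambda>k. F k y) \<longlonglongrightarrow> P y" and e: "e > 0"
  shows "\<exists>K. \<forall>k\<ge>K. \<forall>y. \<bar>F k y - P y\<bar> < e"
proof -
  have e2: "e/2 > 0" using e by simp
  from order_tendstoD(2)[OF P_bot e2] obtain a where a: "\<And>y. y \<le> a \<Longrightarrow> P y < e/2"
    unfolding eventually_at_bot_linorder by blast
  have "1 - e/2 < 1" using e by simp
  from order_tendstoD(1)[OF P_top this] obtain b0 where b0: "\<And>y. y \<ge> b0 \<Longrightarrow> P y > 1 - e/2"
    unfolding eventually_at_top_linorder by blast
  define b where "b = max b0 (a+1)"
  have ab: "a < b" and b: "\<And>y. y \<ge> b \<Longrightarrow> P y > 1 - e/2" using b0 by (auto simp: b_def)
  have "uniformly_continuous_on {a..b} P"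
    by (rule compact_uniformly_continuous) (auto intro: continuous_at_imp_continuous_on cont_P)
  then obtain d where d: "d > 0" and
    dP: "\<And>x x'. x \<in> {a..b} \<Longrightarrow> x' \<in> {a..b} \<Longrightarrow> dist x' x < d \<Longrightarrow> dist (P x') (P x) < e/2"
    unfolding uniformly_continuous_on_def using e2 by metis
  obtain m p where p0: "p 0 = a" and pm: "p m = b" and p_range: "\<And>j. p j \<in> {a..b}"
    and grid: "\<And>y. y \<in> {a..b} \<Longrightarrow> \<exists>j<m. p j \<le> y \<and> y \<le> p (Suc j) \<and> y - p j < d \<and> p (Suc j) - y < d"
    using interval_fine_grid[OF ab d] by metis
  have "\<forall>\<^sub>F k in sequentially. \<forall>j\<in>{..m}. \<bar>F k (p j) - P (p j)\<bar> < e/2"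
  proof (rule eventually_ball_finite)
    show "\<forall>j\<in>{..m}. \<forall>\<^sub>F k in sequentially. \<bar>F k (p j) - P (p j)\<bar> < e/2"
    proof
      fix j
      have "(\<lambda>k. F k (p j) - P (p j)) \<longlonglongrightarrow> 0" using conv[of "p j"] by (simp add: LIM_zero)
      then show "\<forall>\<^sub>F k in sequentially. \<bar>F k (p j) - P (p j)\<bar> < e/2"
        using e2 unfolding tendsto_iff dist_real_def by (auto elim!: allE[where x="e/2"])
    qed
  qed simp
  then obtain K where K: "\<And>k j. k \<ge> K \<Longrightarrow> j \<le> m \<Longrightarrow> \<bar>F k (p j) - P (p j)\<bar> < e/2"
    unfolding eventually_sequentially by blast
  have "\<bar>F k y - P y\<bar> < e" if k: "k \<ge> K" for k y
  proof (cases "y < a")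
    case True
    have "F k y \<le> F k a" using mono_F[of k] True by (simp add: mono_def)
    moreover have "\<bar>F k a - P a\<bar> < e/2" using K[OF k, of 0] p0 by simp
    ultimately show ?thesis using a[of a] a[of y] True P_bounds[of y] F_bounds[of k y] by linarith
  next
    case not_below: False
    show ?thesis
    proof (cases "y > b")
      case True
      have "F k b \<le> F k y" using mono_F[of k] True by (simp add: mono_def)
      moreover have "\<bar>F k b - P b\<bar> < e/2" using K[OF k, of m] pm by simp
      ultimately show ?thesis using b[of b] b[of y] True P_bounds[of y] F_bounds[of k y] by linarith
    next
      case False
      then have y: "y \<in> {a..b}" using not_below by auto
      then obtain j where "j < m" and pj: "p j \<le> y" "y \<le> p (Suc j)" "y - p j < d" "p (Suc j) - y < d"
        using grid by blast
      then have "\<bar>F k (p j) - P (p j)\<bar> < e/2" "\<bar>F k (p (Suc j)) - P (p (Suc j))\<bar> < e/2"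
        using K[OF k] by auto
      moreover have "F k (p j) \<le> F k y" "F k y \<le> F k (p (Suc j))"
        using mono_F[of k] pj by (auto simp: mono_def)
      moreover have "dist (P (p j)) (P y) < e/2"
        by (rule dP) (use pj y p_range in \<open>auto simp: dist_real_def\<close>)
      moreover have "dist (P (p (Suc j))) (P y) < e/2"
        by (rule dP) (use pj y p_range in \<open>auto simp: dist_real_def\<close>)
      ultimately show ?thesis unfolding dist_real_def abs_less_iff by linarith
    qed
  qed
  then show ?thesis by blast
qed

lemma tendsto_between_shifts:
  fixes F G :: "nat \<Rightarrow> real \<Rightarrow> real"
  assumes mono_F: "\<And>k y y'. y \<le> y' \<Longrightarrow> F k y \<le> F k y'"
    and F_le_G: "\<And>k y. F k y \<le> G k y" and G_le_F: "\<And>k y y'. y < y' \<Longrightarrow> G k y \<le> F k y'"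
    and conv: "\<And>y. (\<lambda>k. F k y) \<longlonglongrightarrow> P y" and cont: "\<And>y. isCont P y"
  shows "(\<lambda>k. G k y) \<longlonglongrightarrow> P y"
proof (rule tendstoI)
  fix e :: real assume e: "e > 0"
  obtain d where d: "d > 0" "\<And>z. dist z y < d \<Longrightarrow> dist (P z) (P y) < e/2"
    using cont[of y] e unfolding continuous_at_eps_delta by (metis half_gt_zero)
  have P_close: "dist (P (y + d/2)) (P y) < e/2" using d by (auto simp: dist_real_def)
  have "\<forall>\<^sub>F k in sequentially. dist (F k y) (P y) < e"
    using conv[of y] e by (rule tendstoD)
  moreover have "\<forall>\<^sub>F k in sequentially. dist (F k (y + d/2)) (P (y + d/2)) < e/2"
    using conv[of "y + d/2"] e by (intro tendstoD) auto
  ultimately show "\<forall>\<^sub>F k in sequentially. dist (G k y) (P y) < e"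
  proof eventually_elim
    case (elim k)
    have "F k y \<le> G k y" "G k y \<le> F k (y + d/2)" using F_le_G G_le_F d by auto
    then show ?case using elim P_close unfolding dist_real_def abs_less_iff by linarith
  qed
qed

interpretation std_normal: real_distribution std_normal_distribution
  by (rule real_dist_normal_dist)

lemma std_normal_cdf_eq_cdf: "std_normal_cdf = cdf std_normal_distribution"
  by (simp add: fun_eq_iff std_normal_cdf_def cdf_def2)

lemma isCont_std_normal_cdf: "isCont std_normal_cdf x"
proof -
  have "emeasure std_normal_distribution {x}
        = (\<integral>\<^sup>+ y. ennreal (std_normal_density y) * indicator {x} y \<partial>lborel)"
    by (subst emeasure_density) auto
  also have "\<dots> = 0" by (rule nn_integral_null_set) auto
  finally show ?thesis
    unfolding std_normal_cdf_eq_cdf by (simp add: std_normal.isCont_cdf measure_def)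
qed

lemma std_normal_cdf_bounds: "0 \<le> std_normal_cdf x \<and> std_normal_cdf x \<le> 1"
  unfolding std_normal_cdf_eq_cdf using std_normal.cdf_nonneg std_normal.cdf_bounded_prob by blast

lemma std_normal_cdf_at_bot: "(std_normal_cdf \<longlongrightarrow> 0) at_bot"
  unfolding std_normal_cdf_eq_cdf using std_normal.cdf_lim_at_bot by simp

lemma std_normal_cdf_at_top: "(std_normal_cdf \<longlongrightarrow> 1) at_top"
  unfolding std_normal_cdf_eq_cdf using std_normal.cdf_lim_at_top_prob by simp

lemma borel_measurable_std_normal_cdf [measurable]: "std_normal_cdf \<in> borel_measurable borel"
  by (intro borel_measurable_continuous_onI continuous_at_imp_continuous_on)
     (auto intro: isCont_std_normal_cdf)

section \<open>Normal scale mixtures\<close>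

text \<open>\<open>normal_mixture \<mu>\<close> is the law of \<open>Z / \<surd>U\<close> with \<open>U \<sim> \<mu>\<close> and \<open>Z\<close> standard normal independent of
  \<open>U\<close>; the value \<open>U \<le> 0\<close> is mapped to the point mass at \<open>0\<close>. \<open>scaled_normal_cdf x u\<close> and
  \<open>scaled_normal_char t u\<close> are the distribution and characteristic functions of \<open>Z / \<surd>u\<close>.\<close>

definition inv_sqrt_pos :: "real \<Rightarrow> real" where
  "inv_sqrt_pos u = (if 0 < u then 1 / sqrt u else 0)"

definition normal_mixture :: "real measure \<Rightarrow> real measure" where
  "normal_mixture \<mu> = distr (\<mu> \<Otimes>\<^sub>M std_normal_distribution) borel (\<lambda>(u, z). z * inv_sqrt_pos u)"

definition scaled_normal_cdf :: "real \<Rightarrow> real \<Rightarrow> real" where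
  "scaled_normal_cdf x u = (if 0 < u then std_normal_cdf (x * sqrt u) else if 0 \<le> x then 1 else 0)"

definition scaled_normal_char :: "real \<Rightarrow> real \<Rightarrow> real" where
  "scaled_normal_char t u = (if 0 < u then exp (- (t\<^sup>2) / (2 * u)) else 1)"

lemma borel_measurable_inv_sqrt_pos [measurable]: "inv_sqrt_pos \<in> borel_measurable borel"
  unfolding inv_sqrt_pos_def by measurable

lemma borel_measurable_scaled_normal_cdf [measurable]:
  "scaled_normal_cdf x \<in> borel_measurable borel"
  unfolding scaled_normal_cdf_def by measurable

lemma borel_measurable_scaled_normal_char [measurable]:
  "scaled_normal_char t \<in> borel_measurable borel"
  unfolding scaled_normal_char_def by measurable

lemma scaled_normal_cdf_bounds: "0 \<le> scaled_normal_cdf x u \<and> scaled_normal_cdf x u \<le> 1"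
  using std_normal_cdf_bounds by (auto simp: scaled_normal_cdf_def)

lemma abs_scaled_normal_char_le_1: "\<bar>scaled_normal_char t u\<bar> \<le> 1"
  by (auto simp: scaled_normal_char_def)

lemma isCont_scaled_normal_char:
  assumes "u \<noteq> 0" shows "isCont (scaled_normal_char t) u"
proof (cases "0 < u")
  case True
  have "eventually (\<lambda>y. scaled_normal_char t y = exp (- (t\<^sup>2) / (2 * y))) (nhds u)"
    using eventually_nhds_in_open[of "{0<..}" u] True
    by (auto elim!: eventually_mono simp: scaled_normal_char_def)
  moreover have "isCont (\<lambda>y. exp (- (t\<^sup>2) / (2 * y))) u"
    using True by (intro continuous_intros) auto
  ultimately show ?thesis using isCont_cong by fastforce
next
  case False
  with assms have "eventually (\<lambda>y. scaled_normal_char t y = 1) (nhds u)"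
    by (intro eventually_mono[OF eventually_nhds_in_open[of "{..<0}" u]])
       (auto simp: scaled_normal_char_def)
  then show ?thesis using isCont_cong[of "scaled_normal_char t" "\<lambda>_. 1"] by simp
qed

lemma real_distribution_normal_mixture:
  assumes "real_distribution \<mu>" shows "real_distribution (normal_mixture \<mu>)"
proof -
  interpret mu: real_distribution \<mu> by fact
  interpret pair_prob_space \<mu> std_normal_distribution ..
  have "prob_space (normal_mixture \<mu>)" unfolding normal_mixture_def
    by (rule prob_space_distr) (simp add: measurable_split_conv)
  then show ?thesis
    by (auto simp: real_distribution_def real_distribution_axioms_def normal_mixture_def)
qed

lemma emeasure_std_normal_scaled_atMost:
  "emeasure std_normal_distribution {z. z * inv_sqrt_pos u \<le> x} = ennreal (scaled_normal_cdf x u)"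
proof (cases "0 < u")
  case True
  then have "{z. z * inv_sqrt_pos u \<le> x} = {..x * sqrt u}"
    by (auto simp: inv_sqrt_pos_def field_simps)
  then show ?thesis using True std_normal.emeasure_eq_measure
    by (simp add: scaled_normal_cdf_def std_normal_cdf_eq_cdf cdf_def2)
next
  case False
  then have "{z. z * inv_sqrt_pos u \<le> x} = (if 0 \<le> x then space std_normal_distribution else {})"
    by (auto simp: inv_sqrt_pos_def)
  then show ?thesis
    using False std_normal.emeasure_space_1 by (simp add: scaled_normal_cdf_def)
qed

lemma cdf_normal_mixture:
  assumes "real_distribution \<mu>"
  shows "cdf (normal_mixture \<mu>) x = (\<integral>u. scaled_normal_cdf x u \<partial>\<mu>)"
proof -
  interpret mu: real_distribution \<mu> by fact
  interpret pair_prob_space \<mu> std_normal_distribution ..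
  let ?X = "{p \<in> space (\<mu> \<Otimes>\<^sub>M std_normal_distribution). snd p * inv_sqrt_pos (fst p) \<le> x}"
  have X_sets: "?X \<in> sets (\<mu> \<Otimes>\<^sub>M std_normal_distribution)" by measurable
  have "cdf (normal_mixture \<mu>) x
        = measure (\<mu> \<Otimes>\<^sub>M std_normal_distribution)
            ((\<lambda>(u, z). z * inv_sqrt_pos u) -` {..x} \<inter> space (\<mu> \<Otimes>\<^sub>M std_normal_distribution))"
    unfolding cdf_def2 normal_mixture_def by (rule measure_distr) (auto simp: measurable_split_conv)
  also have "(\<lambda>(u, z). z * inv_sqrt_pos u) -` {..x} \<inter> space (\<mu> \<Otimes>\<^sub>M std_normal_distribution) = ?X"
    by auto
  finally have cdf_eq: "cdf (normal_mixture \<mu>) x = measure (\<mu> \<Otimes>\<^sub>M std_normal_distribution) ?X" .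
  have "emeasure (\<mu> \<Otimes>\<^sub>M std_normal_distribution) ?X
        = (\<integral>\<^sup>+u. emeasure std_normal_distribution (Pair u -` ?X) \<partial>\<mu>)"
    by (rule std_normal.emeasure_pair_measure_alt[OF X_sets])
  also have "\<dots> = (\<integral>\<^sup>+u. ennreal (scaled_normal_cdf x u) \<partial>\<mu>)"
    by (intro nn_integral_cong)
       (simp add: space_pair_measure emeasure_std_normal_scaled_atMost[symmetric] vimage_def)
  also have "\<dots> = ennreal (\<integral>u. scaled_normal_cdf x u \<partial>\<mu>)"
    by (rule nn_integral_eq_integral)
       (auto intro!: mu.integrable_const_bound[where B=1] simp: scaled_normal_cdf_bounds abs_le_iff)
  finally show ?thesis
    using cdf_eq by (simp add: measure_def integral_nonneg_AE scaled_normal_cdf_bounds)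
qed

lemma char_normal_mixture:
  assumes "real_distribution \<mu>"
  shows "char (normal_mixture \<mu>) t = complex_of_real (\<integral>u. scaled_normal_char t u \<partial>\<mu>)"
proof -
  interpret mu: real_distribution \<mu> by fact
  interpret pair_prob_space \<mu> std_normal_distribution ..
  let ?f = "\<lambda>p. iexp (t * (snd p * inv_sqrt_pos (fst p)))"
  have integrable_f: "integrable (\<mu> \<Otimes>\<^sub>M std_normal_distribution) ?f"
    by (rule integrable_const_bound[where B=1]) (auto simp: norm_exp_i_times)
  have inner: "(\<integral>z. ?f (u, z) \<partial>std_normal_distribution) = complex_of_real (scaled_normal_char t u)" for u
  proof -
    have "(\<integral>z. ?f (u, z) \<partial>std_normal_distribution) = char std_normal_distribution (t * inv_sqrt_pos u)"
      by (simp add: char_def ac_simps)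
    then show ?thesis
      by (simp add: char_std_normal_distribution scaled_normal_char_def inv_sqrt_pos_def
          power_divide field_simps)
  qed
  have "char (normal_mixture \<mu>) t = (\<integral>p. ?f p \<partial>(\<mu> \<Otimes>\<^sub>M std_normal_distribution))"
    unfolding char_def normal_mixture_def
    by (subst integral_distr) (auto simp: measurable_split_conv case_prod_beta)
  also have "\<dots> = (\<integral>u. (\<integral>z. ?f (u, z) \<partial>std_normal_distribution) \<partial>\<mu>)"
    using integral_fst'[OF integrable_f] by simp
  also have "\<dots> = complex_of_real (\<integral>u. scaled_normal_char t u \<partial>\<mu>)"
    unfolding inner by simp
  finally show ?thesis .
qed

section \<open>Randomly indexed statistics\<close>

lemma (in prob_space) sums_integral_by_values:
  fixes N :: "'a \<Rightarrow> nat" and f :: "nat \<Rightarrow> 'a \<Rightarrow> real"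
  assumes N: "N \<in> measurable M (count_space UNIV)"
    and f: "\<And>k. f k \<in> borel_measurable M" and f_bounded: "\<And>k x. \<bar>f k x\<bar> \<le> 1"
  shows "(\<lambda>k. \<integral>x. indicator {x \<in> space M. N x = k} x * f k x \<partial>M) sums (\<integral>x. f (N x) x \<partial>M)"
proof -
  let ?D = "\<lambda>k. {x \<in> space M. N x = k}"
  let ?F = "\<lambda>k x. indicator (?D k) x * f k x"
  have D_sets: "?D k \<in> sets M" for k using N by measurable
  have integrable_F: "integrable M (?F k)" for k
    by (rule integrable_const_bound[where B=1])
       (use f_bounded D_sets f in \<open>auto simp: indicator_def\<close>)
  have F_single: "?F k x = (if k = N x then f k x else 0)" if "x \<in> space M" for k x
    using that by (auto simp: indicator_def)
  have "(\<lambda>k. measure M (?D k)) sums measure M (\<Union>k. ?D k)"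
    by (rule measure_UNION) (auto simp: disjoint_family_on_def D_sets)
  then have "summable (\<lambda>k. \<integral>x. norm (?F k x) \<partial>M)"
  proof (rule summable_comparison_test'[OF sums_summable])
    fix k :: nat
    have "(\<integral>x. norm (?F k x) \<partial>M) \<le> (\<integral>x. indicator (?D k) x \<partial>M)"
      using integrable_indicator[of "?D k" M "1::real", OF D_sets]
      by (intro integral_mono integrable_norm[OF integrable_F])
         (use f_bounded in \<open>auto simp: abs_mult less_top[symmetric] split: split_indicator\<close>)
    then show "norm (\<integral>x. norm (?F k x) \<partial>M) \<le> measure M (?D k)" using D_sets by simp
  qed
  moreover have "AE x in M. summable (\<lambda>k. norm (?F k x))"
  proof (rule AE_I2)
    fix x assume "x \<in> space M"
    then have "(\<lambda>k. norm (?F k x)) = (\<lambda>k. if k = N x then norm (f k x) else 0)"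
      using F_single by auto
    then show "summable (\<lambda>k. norm (?F k x))" by simp
  qed
  ultimately have "(\<lambda>k. integral\<^sup>L M (?F k)) sums (\<integral>x. (\<Sum>k. ?F k x) \<partial>M)"
    by (intro sums_integral[OF integrable_F])
  also have "(\<integral>x. (\<Sum>k. ?F k x) \<partial>M) = (\<integral>x. f (N x) x \<partial>M)"
  proof (rule Bochner_Integration.integral_cong[OF refl])
    fix x assume "x \<in> space M"
    then have "(\<lambda>k. ?F k x) = (\<lambda>k. if k = N x then f k x else 0)"
      using F_single by auto
    then show "(\<Sum>k. ?F k x) = f (N x) x"
      using sums_single[of "N x" "\<lambda>k. f k x"] by (simp add: sums_iff)
  qed
  finally show ?thesis .
qed

lemma abs_sums_le:
  fixes a b :: "nat \<Rightarrow> real"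
  assumes "a sums A" "b sums B" "\<And>k. \<bar>a k\<bar> \<le> b k"
  shows "\<bar>A\<bar> \<le> B"
proof -
  have "A \<le> B" by (rule sums_le[OF _ assms(1,2)]) (use assms(3) in \<open>auto simp: abs_le_iff\<close>)
  moreover have "- A \<le> B" by (rule sums_le[OF _ sums_minus[OF assms(1)] assms(2)])
      (use assms(3) in \<open>auto simp: abs_le_iff\<close>)
  ultimately show ?thesis by linarith
qed

locale random_index_statistic = prob_space M
  for M :: "'a measure" and X :: "nat \<Rightarrow> 'a \<Rightarrow> real" and N :: "nat \<Rightarrow> 'a \<Rightarrow> nat"
    and T :: "nat \<Rightarrow> (nat \<Rightarrow> real) \<Rightarrow> real" and \<sigma> \<theta> :: real +
  assumes X_measurable: "\<And>i. X i \<in> borel_measurable M"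
    and N_measurable: "\<And>n. N n \<in> measurable M (count_space UNIV)"
    and N_indep_X: "\<And>n. indep_set
                 {N n -` A \<inter> space M | A. A \<in> sets (count_space UNIV)}
                 {(\<lambda>\<omega> i. X i \<omega>) -` B \<inter> space M | B. B \<in> sets (PiM UNIV (\<lambda>_::nat. borel))}"
    and N_tendsto_infinity: "\<And>K. (\<lambda>n. prob {\<omega> \<in> space M. N n \<omega> \<le> K}) \<longlonglongrightarrow> 0"
    and T_measurable: "\<And>n. T n \<in> borel_measurable (PiM {1..n} (\<lambda>_. borel))"
    and asymptotically_normal: "\<And>x. (\<lambda>n. prob {\<omega> \<in> space M.
              \<sigma> * sqrt (real n) * (T n (restrict (\<lambda>i. X i \<omega>) {1..n}) - \<theta>) < x})
            \<longlonglongrightarrow> std_normal_cdf x"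
begin

definition sample :: "nat \<Rightarrow> 'a \<Rightarrow> nat \<Rightarrow> real" where
  "sample k \<omega> = restrict (\<lambda>i. X i \<omega>) {1..k}"

definition normalized_stat :: "nat \<Rightarrow> nat \<Rightarrow> 'a \<Rightarrow> real" where
  "normalized_stat n k \<omega> = \<sigma> * sqrt (real n) * (T k (sample k \<omega>) - \<theta>)"

definition random_stat :: "nat \<Rightarrow> 'a \<Rightarrow> real" where
  "random_stat n \<omega> = normalized_stat n (N n \<omega>) \<omega>"

definition index_ratio :: "nat \<Rightarrow> 'a \<Rightarrow> real" where
  "index_ratio n \<omega> = real (N n \<omega>) / real n"

definition stat_cdf :: "nat \<Rightarrow> real \<Rightarrow> real" where
  "stat_cdf k y = prob {\<omega> \<in> space M. normalized_stat k k \<omega> \<le> y}"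

abbreviation index_event :: "nat \<Rightarrow> nat \<Rightarrow> 'a set" where
  "index_event n k \<equiv> {\<omega> \<in> space M. N n \<omega> = k}"

lemma measurable_sample: "sample k \<in> measurable M (PiM {1..k} (\<lambda>_. borel))"
  unfolding sample_def by (intro measurable_restrict X_measurable)

lemma borel_measurable_normalized_stat [measurable]: "normalized_stat n k \<in> borel_measurable M"
  unfolding normalized_stat_def[abs_def]
  using measurable_compose[OF measurable_sample T_measurable] by measurable

lemma borel_measurable_random_stat: "random_stat n \<in> borel_measurable M"
  unfolding random_stat_def[abs_def]
  by (rule measurable_compose_countable[OF _ N_measurable]) measurable

lemma borel_measurable_index_ratio: "index_ratio n \<in> borel_measurable M"
  unfolding index_ratio_def[abs_def]
  by (rule measurable_compose[OF N_measurable]) simp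

lemma sets_index_event [measurable]: "index_event n k \<in> sets M"
  using N_measurable[of n] by measurable

lemma stat_cdf_tendsto: "(\<lambda>k. stat_cdf k y) \<longlonglongrightarrow> std_normal_cdf y"
proof (rule tendsto_between_shifts[OF _ _ _ _ isCont_std_normal_cdf])
  let ?F = "\<lambda>k y. prob {\<omega> \<in> space M. normalized_stat k k \<omega> < y}"
  show "(\<lambda>k. ?F k y) \<longlonglongrightarrow> std_normal_cdf y" for y
    using asymptotically_normal by (simp add: normalized_stat_def sample_def)
  show "?F k y \<le> ?F k y'" if "y \<le> y'" for k y y'
    using that by (intro finite_measure_mono) auto
  show "?F k y \<le> stat_cdf k y" for k y
    unfolding stat_cdf_def by (intro finite_measure_mono) auto
  show "stat_cdf k y \<le> ?F k y'" if "y < y'" for k y y'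
    unfolding stat_cdf_def using that by (intro finite_measure_mono) auto
qed

lemma stat_cdf_uniform: "e > 0 \<Longrightarrow> \<exists>K. \<forall>k\<ge>K. \<forall>y. \<bar>stat_cdf k y - std_normal_cdf y\<bar> < e"
proof (rule polya_uniform_convergence[OF _ _ isCont_std_normal_cdf std_normal_cdf_bounds
      std_normal_cdf_at_bot std_normal_cdf_at_top stat_cdf_tendsto])
  show "mono (stat_cdf k)" for k
    unfolding mono_def stat_cdf_def by (intro allI impI finite_measure_mono) auto
  show "0 \<le> stat_cdf k y \<and> stat_cdf k y \<le> 1" for k y
    unfolding stat_cdf_def by simp
qed

lemma prob_index_event_Int:
  "prob (index_event n k \<inter> {\<omega> \<in> space M. normalized_stat n k \<omega> \<le> x})
   = prob (index_event n k) * prob {\<omega> \<in> space M. normalized_stat n k \<omega> \<le> x}"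
proof (rule indep_setD[OF N_indep_X[of n]])
  show "index_event n k \<in> {N n -` A \<inter> space M | A. A \<in> sets (count_space UNIV)}"
    by (intro CollectI exI[of _ "{k}"]) auto
  let ?B = "{f \<in> space (PiM UNIV (\<lambda>_::nat. borel)).
              \<sigma> * sqrt (real n) * (T k (restrict f {1..k}) - \<theta>) \<le> x}"
  have "(\<lambda>f. T k (restrict f {1..k})) \<in> borel_measurable (PiM UNIV (\<lambda>_::nat. borel))"
    by (rule measurable_compose[OF measurable_restrict_subset T_measurable]) simp
  then have "?B \<in> sets (PiM UNIV (\<lambda>_::nat. borel))" by measurable
  moreover have "{\<omega> \<in> space M. normalized_stat n k \<omega> \<le> x} = (\<lambda>\<omega> i. X i \<omega>) -` ?B \<inter> space M"
    by (auto simp: normalized_stat_def sample_def space_PiM)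
  ultimately show "{\<omega> \<in> space M. normalized_stat n k \<omega> \<le> x}
      \<in> {(\<lambda>\<omega> i. X i \<omega>) -` B \<inter> space M | B. B \<in> sets (PiM UNIV (\<lambda>_::nat. borel))}"
    by blast
qed

lemma sums_prob_index_event:
  assumes "\<And>k. \<bar>f k\<bar> \<le> 1"
  shows "(\<lambda>k. prob (index_event n k) * f k) sums (\<integral>\<omega>. f (N n \<omega>) \<partial>M)"
  using sums_integral_by_values[OF N_measurable[of n], of "\<lambda>k _. f k"] assms
  by (simp add: Int_absorb2)

lemma sums_cdf_random_stat:
  "(\<lambda>k. prob (index_event n k) * prob {\<omega> \<in> space M. normalized_stat n k \<omega> \<le> x})
     sums cdf (distr M borel (random_stat n)) x"
proof -
  let ?E = "\<lambda>k. {\<omega> \<in> space M. normalized_stat n k \<omega> \<le> x}"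
  have "cdf (distr M borel (random_stat n)) x = prob (random_stat n -` {..x} \<inter> space M)"
    unfolding cdf_def2 by (rule measure_distr[OF borel_measurable_random_stat]) simp
  also have "\<dots> = (\<integral>\<omega>. indicator (random_stat n -` {..x} \<inter> space M) \<omega> \<partial>M)"
    using borel_measurable_random_stat[of n] by simp
  also have "\<dots> = (\<integral>\<omega>. indicator (?E (N n \<omega>)) \<omega> \<partial>M)"
    by (intro Bochner_Integration.integral_cong refl)
       (auto simp: random_stat_def split: split_indicator)
  finally have cdf_eq: "cdf (distr M borel (random_stat n)) x = \<dots>" .
  have "(\<integral>\<omega>. indicator (index_event n k) \<omega> * indicator (?E k) \<omega> \<partial>M)
        = prob (index_event n k) * prob (?E k)" for k
    using prob_index_event_Int[of n k x] by (simp add: indicator_inter_arith[symmetric])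
  then show ?thesis
    using sums_integral_by_values[OF N_measurable[of n], of "\<lambda>k. indicator (?E k)"] cdf_eq by simp
qed

lemma sums_cdf_normal_mixture_index_ratio:
  "(\<lambda>k. prob (index_event n k) * scaled_normal_cdf x (real k / real n))
     sums cdf (normal_mixture (distr M borel (index_ratio n))) x"
proof -
  have "cdf (normal_mixture (distr M borel (index_ratio n))) x
        = (\<integral>u. scaled_normal_cdf x u \<partial>distr M borel (index_ratio n))"
    by (rule cdf_normal_mixture) (simp add: borel_measurable_index_ratio)
  also have "\<dots> = (\<integral>\<omega>. scaled_normal_cdf x (real (N n \<omega>) / real n) \<partial>M)"
    by (simp add: integral_distr[OF borel_measurable_index_ratio] index_ratio_def)
  finally show ?thesis
    using sums_prob_index_event[of "\<lambda>k. scaled_normal_cdf x (real k / real n)" n]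
    by (simp add: abs_le_iff scaled_normal_cdf_bounds)
qed

lemma prob_normalized_stat_le:
  assumes "0 < k" "0 < n"
  shows "prob {\<omega> \<in> space M. normalized_stat n k \<omega> \<le> x}
         = stat_cdf k (x * sqrt (real k / real n))"
proof -
  have "normalized_stat n k \<omega> \<le> x \<longleftrightarrow> normalized_stat k k \<omega> \<le> x * sqrt (real k / real n)" for \<omega>
  proof -
    have pos: "0 < sqrt (real k / real n)" using assms by simp
    have "normalized_stat k k \<omega> = normalized_stat n k \<omega> * sqrt (real k / real n)"
      using assms by (simp add: normalized_stat_def real_sqrt_divide)
    then show ?thesis using pos by simp
  qed
  then show ?thesis by (simp add: stat_cdf_def)
qed

lemma integral_truncation_weight_le:
  assumes "0 \<le> e" "e \<le> 1"
  shows "(\<integral>\<omega>. (if N n \<omega> \<le> K then 1 else e) \<partial>M) \<le> prob {\<omega> \<in> space M. N n \<omega> \<le> K} + e"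
proof -
  let ?A = "{\<omega> \<in> space M. N n \<omega> \<le> K}"
  have A_sets: "?A \<in> sets M" using N_measurable[of n] by measurable
  have integrable_A: "integrable M (indicator ?A :: 'a \<Rightarrow> real)"
    using integrable_indicator[of ?A M "1::real", OF A_sets] by (simp add: less_top[symmetric])
  have "(\<integral>\<omega>. (if N n \<omega> \<le> K then 1 else e) \<partial>M) \<le> (\<integral>\<omega>. indicator ?A \<omega> + e \<partial>M)"
  proof (rule integral_mono)
    show "integrable M (\<lambda>\<omega>. if N n \<omega> \<le> K then 1 else e)"
      by (rule integrable_const_bound[where B=1])
         (use assms in \<open>auto intro: measurable_compose[OF N_measurable[of n]]\<close>)
  qed (use assms integrable_A in \<open>auto split: split_indicator\<close>)
  also have "\<dots> = prob ?A + e"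
    using integrable_A A_sets by (subst Bochner_Integration.integral_add) (auto simp: prob_space)
  finally show ?thesis .
qed

text \<open>Termwise the two series differ by at most \<open>1\<close> for \<open>k \<le> K\<close> and by at most \<open>e\<close> beyond.\<close>

lemma abs_cdf_random_stat_minus_normal_mixture_le:
  assumes n: "0 < n" and e: "0 \<le> e" "e \<le> 1"
    and K: "\<And>k y. K \<le> k \<Longrightarrow> \<bar>stat_cdf k y - std_normal_cdf y\<bar> < e"
  shows "\<bar>cdf (distr M borel (random_stat n)) x
          - cdf (normal_mixture (distr M borel (index_ratio n))) x\<bar>
         \<le> prob {\<omega> \<in> space M. N n \<omega> \<le> K} + e"
proof -
  let ?w = "\<lambda>k. if k \<le> K then 1 else e"
  let ?d = "\<lambda>k. prob {\<omega> \<in> space M. normalized_stat n k \<omega> \<le> x} - scaled_normal_cdf x (real k / real n)"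
  have "\<bar>?d k\<bar> \<le> ?w k" for k
  proof (cases "k \<le> K")
    case True
    then show ?thesis using scaled_normal_cdf_bounds[of x "real k / real n"]
      by (simp add: abs_le_iff) (smt (verit) measure_nonneg prob_le_1)
  next
    case False
    then show ?thesis
      using K[of k "x * sqrt (real k / real n)"] n
      by (simp add: prob_normalized_stat_le scaled_normal_cdf_def real_sqrt_divide)
  qed
  then have "\<bar>prob (index_event n k) * ?d k\<bar> \<le> prob (index_event n k) * ?w k" for k
    by (simp add: abs_mult mult_left_mono)
  then have "\<bar>cdf (distr M borel (random_stat n)) x
              - cdf (normal_mixture (distr M borel (index_ratio n))) x\<bar>
             \<le> (\<integral>\<omega>. ?w (N n \<omega>) \<partial>M)"
    using abs_sums_le[OF sums_diff[OF sums_cdf_random_stat sums_cdf_normal_mixture_index_ratio]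
        sums_prob_index_event[of ?w n]] e
    by (simp add: right_diff_distrib)
  also have "\<dots> \<le> prob {\<omega> \<in> space M. N n \<omega> \<le> K} + e"
    using integral_truncation_weight_le[OF e] by simp
  finally show ?thesis .
qed

lemma cdf_random_stat_minus_normal_mixture:
  "(\<lambda>n. cdf (distr M borel (random_stat n)) x
        - cdf (normal_mixture (distr M borel (index_ratio n))) x) \<longlonglongrightarrow> 0"
proof (rule tendstoI)
  fix e0 :: real assume "e0 > 0"
  define e where "e = min 1 (e0/3)"
  have e: "e > 0" "e \<le> 1" "3 * e \<le> e0" using \<open>e0 > 0\<close> by (auto simp: e_def)
  obtain K where K: "\<And>k y. k \<ge> K \<Longrightarrow> \<bar>stat_cdf k y - std_normal_cdf y\<bar> < e"
    using stat_cdf_uniform[OF e(1)] by blast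
  have "\<forall>\<^sub>F n in sequentially. prob {\<omega> \<in> space M. N n \<omega> \<le> K} < e"
    using order_tendstoD(2)[OF N_tendsto_infinity e(1)] .
  then show "\<forall>\<^sub>F n in sequentially. dist (cdf (distr M borel (random_stat n)) x
      - cdf (normal_mixture (distr M borel (index_ratio n))) x) 0 < e0"
    using eventually_gt_at_top[of 0]
  proof eventually_elim
    case (elim n)
    then show ?case
      using abs_cdf_random_stat_minus_normal_mixture_le[of n e K x] e K
      by (simp add: dist_real_def)
  qed
qed

lemma weak_conv_random_stat_iff_normal_mixture:
  "weak_conv_m (\<lambda>n. distr M borel (random_stat n)) L
   \<longleftrightarrow> weak_conv_m (\<lambda>n. normal_mixture (distr M borel (index_ratio n))) L"
proof -
  have "(\<lambda>n. cdf (distr M borel (random_stat n)) x) \<longlonglongrightarrow> c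
        \<longleftrightarrow> (\<lambda>n. cdf (normal_mixture (distr M borel (index_ratio n))) x) \<longlonglongrightarrow> c" for x c
    using tendsto_diff[OF _ cdf_random_stat_minus_normal_mixture[of x]]
      tendsto_add[OF _ cdf_random_stat_minus_normal_mixture[of x]]
    by force
  then show ?thesis unfolding weak_conv_m_def weak_conv_def by blast
qed

lemma index_ratio_nonpos_tendsto:
  "(\<lambda>n. measure (distr M borel (index_ratio n)) {..0}) \<longlonglongrightarrow> 0"
proof (rule tendsto_sandwich[OF _ _ tendsto_const N_tendsto_infinity[of 0]])
  show "\<forall>\<^sub>F n in sequentially. 0 \<le> measure (distr M borel (index_ratio n)) {..0}"
    by simp
  show "\<forall>\<^sub>F n in sequentially.
          measure (distr M borel (index_ratio n)) {..0} \<le> prob {\<omega> \<in> space M. N n \<omega> \<le> 0}"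
    using eventually_gt_at_top[of "0::nat"]
  proof eventually_elim
    case (elim n)
    have "measure (distr M borel (index_ratio n)) {..0} = prob (index_ratio n -` {..0} \<inter> space M)"
      by (rule measure_distr[OF borel_measurable_index_ratio]) simp
    also have "\<dots> \<le> prob {\<omega> \<in> space M. N n \<omega> \<le> 0}"
      using elim N_measurable[of n]
      by (intro finite_measure_mono) (auto simp: index_ratio_def divide_le_0_iff)
    finally show ?case .
  qed
qed

end

section \<open>The reciprocal of a generalized Mittag-Leffler variable\<close>

lemma gml_law_AE_pos:
  assumes gml: "is_gml_law \<delta> \<nu> G" and "0 < \<delta>" "0 < \<nu>"
  shows "AE x in G. 0 < x"
proof -
  interpret G: real_distribution G using gml by (simp add: is_gml_law_def)
  have nonneg: "AE x in G. 0 \<le> x" using gml by (simp add: is_gml_law_def)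
  text \<open>\<open>P(M = 0) \<le> E exp(-s M) = (1 + s\<^sup>\<delta>)\<^sup>-\<^sup>\<nu> \<rightarrow> 0\<close> as \<open>s \<rightarrow> \<infinity>\<close>.\<close>
  have atom_le: "measure G {0} \<le> (1 + s powr \<delta>) powr (- \<nu>)" if "s \<ge> 0" for s
  proof -
    have "integrable G (\<lambda>x. exp (- s * x))"
      by (rule G.integrable_const_bound[where B=1])
         (use nonneg in \<open>auto elim!: eventually_mono intro: mult_nonneg_nonneg that\<close>)
    then have "(\<integral>x. indicator {0} x \<partial>G) \<le> (\<integral>x. exp (- s * x) \<partial>G)"
      by (intro integral_mono) (auto split: split_indicator intro: G.integrable_const_bound[where B=1])
    then show ?thesis using gml that by (simp add: is_gml_law_def)
  qed
  have "((\<lambda>s::real. (1 + s powr \<delta>) powr (- \<nu>)) \<longlongrightarrow> 0) at_top"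
    using assms(2,3) by real_asymp
  moreover have "eventually (\<lambda>s. measure G {0} \<le> (1 + s powr \<delta>) powr (- \<nu>)) at_top"
    using eventually_ge_at_top[of "0::real"] by eventually_elim (rule atom_le)
  ultimately have "measure G {0} \<le> 0"
    by (intro tendsto_le[OF trivial_limit_at_top_linorder _ tendsto_const])
  then have "AE x in G. x \<noteq> 0"
    using measure_nonneg[of G "{0}"]
    by (intro AE_I[where N="{0}"]) (auto simp: G.emeasure_eq_measure)
  then show ?thesis using nonneg by eventually_elim auto
qed

lemma measure_reciprocal_gml_nonpos:
  assumes gml: "is_gml_law \<delta> \<nu> G" and "0 < \<delta>" "0 < \<nu>"
  shows "measure (distr G borel (\<lambda>m. 1 / (2 * m))) {..0} = 0"
proof -
  interpret G: real_distribution G using gml by (simp add: is_gml_law_def)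
  have "measure (distr G borel (\<lambda>m. 1 / (2 * m))) {..0}
        = measure G ((\<lambda>m. 1 / (2 * m)) -` {..0} \<inter> space G)"
    by (rule measure_distr) auto
  also have "\<dots> = measure G {}"
  proof (rule measure_eq_AE)
    show "(\<lambda>m. 1 / (2 * m)) -` {..0} \<inter> space G \<in> sets G"
      by (rule measurable_sets[where A=borel]) auto
  qed (use gml_law_AE_pos[OF assms] in \<open>auto elim: eventually_mono\<close>)
  finally show ?thesis by simp
qed

lemma integral_scaled_normal_char_reciprocal_gml:
  assumes gml: "is_gml_law \<delta> \<nu> G" and "0 < \<delta>" "0 < \<nu>"
  shows "(\<integral>u. scaled_normal_char t u \<partial>distr G borel (\<lambda>m. 1 / (2 * m)))
         = (1 + \<bar>t\<bar> powr (2 * \<delta>)) powr (- \<nu>)"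
proof -
  interpret G: real_distribution G using gml by (simp add: is_gml_law_def)
  have "(\<integral>u. scaled_normal_char t u \<partial>distr G borel (\<lambda>m. 1 / (2 * m)))
        = (\<integral>m. scaled_normal_char t (1 / (2 * m)) \<partial>G)"
    by (rule integral_distr) auto
  also have "\<dots> = (\<integral>m. exp (- (t\<^sup>2) * m) \<partial>G)"
    using gml_law_AE_pos[OF assms]
    by (intro integral_cong_AE) (auto elim!: eventually_mono simp: scaled_normal_char_def)
  also have "\<dots> = (1 + (t\<^sup>2) powr \<delta>) powr (- \<nu>)"
    using gml by (simp add: is_gml_law_def)
  also have "(t\<^sup>2) powr \<delta> = \<bar>t\<bar> powr (2 * \<delta>)"
  proof (cases "t = 0")
    case False
    then have "(t\<^sup>2) powr \<delta> = (\<bar>t\<bar> powr 2) powr \<delta>" by (simp add: powr_realpow)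
    then show ?thesis by (simp only: powr_powr)
  qed simp
  finally show ?thesis .
qed

section \<open>Weak convergence from moments\<close>

lemma (in prob_space) abs_integral_diff_le:
  fixes f g :: "'a \<Rightarrow> real"
  assumes "integrable M f" "integrable M g" "\<And>x. x \<in> space M \<Longrightarrow> \<bar>f x - g x\<bar> \<le> c"
  shows "\<bar>(\<integral>x. f x \<partial>M) - (\<integral>x. g x \<partial>M)\<bar> \<le> c"
proof -
  have "\<bar>(\<integral>x. f x \<partial>M) - (\<integral>x. g x \<partial>M)\<bar> = \<bar>\<integral>x. f x - g x \<partial>M\<bar>"
    using assms(1,2) by simp
  also have "\<dots> \<le> (\<integral>x. \<bar>f x - g x\<bar> \<partial>M)" by (rule integral_abs_bound)
  also have "\<dots> \<le> (\<integral>x. c \<partial>M)"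
    using assms by (intro integral_mono_AE) (auto intro!: AE_I2)
  finally show ?thesis by (simp add: prob_space)
qed

lemma integrable_real_distribution_bounded:
  fixes g :: "real \<Rightarrow> real"
  assumes "real_distribution \<mu>" "g \<in> borel_measurable borel" "\<And>x. \<bar>g x\<bar> \<le> B"
  shows "integrable \<mu> g"
proof -
  interpret real_distribution \<mu> by fact
  show ?thesis by (rule integrable_const_bound[where B=B]) (use assms in auto)
qed

text \<open>Approximate \<open>f\<close> uniformly on \<open>[0,1]\<close> by a polynomial (Weierstrass).\<close>

lemma integral_tendsto_of_moments:
  fixes \<mu> :: "nat \<Rightarrow> real measure" and w f :: "real \<Rightarrow> real"
  assumes \<mu>: "\<And>n. real_distribution (\<mu> n)" and \<mu>0: "real_distribution \<mu>0"
    and w: "w \<in> borel_measurable borel" and w_bounds: "\<And>x. 0 \<le> w x \<and> w x \<le> 1"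
    and moments: "\<And>k. (\<lambda>n. \<integral>x. w x ^ k \<partial>\<mu> n) \<longlonglongrightarrow> (\<integral>x. w x ^ k \<partial>\<mu>0)"
    and f: "\<And>y. isCont f y"
  shows "(\<lambda>n. \<integral>x. f (w x) \<partial>\<mu> n) \<longlonglongrightarrow> (\<integral>x. f (w x) \<partial>\<mu>0)"
proof (rule tendstoI)
  fix e :: real assume e: "e > 0"
  have f_cont: "continuous_on UNIV f" by (intro continuous_at_imp_continuous_on) (auto intro: f)
  have f_meas: "f \<in> borel_measurable borel" using f_cont by (rule borel_measurable_continuous_onI)
  have "compact (f ` {0..1})"
    by (rule compact_continuous_image) (use f_cont in \<open>auto intro: continuous_on_subset\<close>)
  from compact_imp_bounded[OF this] obtain B where "\<forall>z\<in>f ` {0..1}. norm z \<le> B"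
    by (auto simp: bounded_iff)
  then have B: "\<And>y. y \<in> {0..1} \<Longrightarrow> \<bar>f y\<bar> \<le> B" by auto
  obtain g where g: "real_polynomial_function g"
    and fg: "\<And>y. y \<in> {0..1} \<Longrightarrow> \<bar>f y - g y\<bar> < e/3"
    by (rule Stone_Weierstrass_real_polynomial_function[of "{0..1::real}" f "e/3"])
       (use e f_cont in \<open>auto intro: continuous_on_subset\<close>)
  obtain a m where g_sum: "g = (\<lambda>y. \<Sum>i\<le>m. a i * y ^ i)"
    using real_polynomial_function_imp_sum[OF g] by blast
  have w_range: "w x \<in> {0..1}" for x using w_bounds[of x] by auto
  have integrable_power: "integrable \<nu> (\<lambda>x. w x ^ k)" if "real_distribution \<nu>" for \<nu> k
    by (rule integrable_real_distribution_bounded[OF that, where B=1])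
       (use w w_bounds in \<open>auto intro: power_le_one\<close>)
  have integral_g: "(\<integral>x. g (w x) \<partial>\<nu>) = (\<Sum>i\<le>m. a i * (\<integral>x. w x ^ i \<partial>\<nu>))"
    if "real_distribution \<nu>" for \<nu>
    unfolding g_sum
    by (subst Bochner_Integration.integral_sum)
       (auto intro!: integrable_mult_right integrable_power[OF that])
  have close: "\<bar>(\<integral>x. f (w x) \<partial>\<nu>) - (\<integral>x. g (w x) \<partial>\<nu>)\<bar> \<le> e/3"
    if \<nu>: "real_distribution \<nu>" for \<nu>
  proof -
    interpret real_distribution \<nu> by (rule \<nu>)
    have f_bound: "\<bar>f (w x)\<bar> \<le> B" and fg_w: "\<bar>f (w x) - g (w x)\<bar> < e/3" for x
      using B[OF w_range] fg[OF w_range] by auto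
    have g_bound: "\<bar>g (w x)\<bar> \<le> B + e/3" for x
      using f_bound[of x] fg_w[of x] unfolding abs_le_iff abs_less_iff by linarith
    have "(\<lambda>x. f (w x)) \<in> borel_measurable borel" using f_meas w by measurable
    moreover have "(\<lambda>x. g (w x)) \<in> borel_measurable borel" unfolding g_sum using w by measurable
    ultimately show ?thesis
      using fg_w
      by (intro abs_integral_diff_le integrable_real_distribution_bounded[OF \<nu> _ f_bound]
            integrable_real_distribution_bounded[OF \<nu> _ g_bound])
         (auto intro: less_imp_le)
  qed
  have "(\<lambda>n. \<integral>x. g (w x) \<partial>\<mu> n) \<longlonglongrightarrow> (\<integral>x. g (w x) \<partial>\<mu>0)"
    unfolding integral_g[OF \<mu>] integral_g[OF \<mu>0] by (intro tendsto_sum tendsto_mult_left moments)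
  then have "\<forall>\<^sub>F n in sequentially. dist (\<integral>x. g (w x) \<partial>\<mu> n) (\<integral>x. g (w x) \<partial>\<mu>0) < e/3"
    using e by (intro tendstoD) auto
  then show "\<forall>\<^sub>F n in sequentially. dist (\<integral>x. f (w x) \<partial>\<mu> n) (\<integral>x. f (w x) \<partial>\<mu>0) < e"
  proof eventually_elim
    case (elim n)
    then show ?case using close[OF \<mu>[of n]] close[OF \<mu>0] e
      unfolding dist_real_def abs_le_iff abs_less_iff by linarith
  qed
qed

lemma weak_conv_distr_of_moments:
  fixes \<mu> :: "nat \<Rightarrow> real measure" and w :: "real \<Rightarrow> real"
  assumes \<mu>: "\<And>n. real_distribution (\<mu> n)" and \<mu>0: "real_distribution \<mu>0"
    and w: "w \<in> borel_measurable borel" and w_bounds: "\<And>x. 0 \<le> w x \<and> w x \<le> 1"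
    and moments: "\<And>k. (\<lambda>n. \<integral>x. w x ^ k \<partial>\<mu> n) \<longlonglongrightarrow> (\<integral>x. w x ^ k \<partial>\<mu>0)"
  shows "weak_conv_m (\<lambda>n. distr (\<mu> n) borel w) (distr \<mu>0 borel w)"
proof (rule integral_bdd_continuous_conv_imp_weak_conv)
  have distr_w: "real_distribution (distr \<nu> borel w)" if "real_distribution \<nu>" for \<nu>
  proof -
    interpret real_distribution \<nu> by (rule that)
    show ?thesis using w by simp
  qed
  show "real_distribution (distr (\<mu> n) borel w)" for n by (rule distr_w[OF \<mu>])
  show "real_distribution (distr \<mu>0 borel w)" by (rule distr_w[OF \<mu>0])
  fix f :: "real \<Rightarrow> real" assume f: "\<And>x. isCont f x" "\<And>x. \<bar>f x\<bar> \<le> 1"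
  have f_meas: "f \<in> borel_measurable borel"
    by (intro borel_measurable_continuous_onI continuous_at_imp_continuous_on) (auto intro: f)
  have integral_distr_w: "(\<integral>x. f x \<partial>distr \<nu> borel w) = (\<integral>x. f (w x) \<partial>\<nu>)"
    if "real_distribution \<nu>" for \<nu>
  proof -
    interpret real_distribution \<nu> by (rule that)
    show ?thesis using w f_meas by (intro integral_distr) auto
  qed
  show "(\<lambda>n. \<integral>x. f x \<partial>distr (\<mu> n) borel w) \<longlonglongrightarrow> (\<integral>x. f x \<partial>distr \<mu>0 borel w)"
    unfolding integral_distr_w[OF \<mu>] integral_distr_w[OF \<mu>0]
    by (rule integral_tendsto_of_moments[OF \<mu> \<mu>0 w w_bounds moments f(1)])
qed

definition exp_neg_inverse :: "real \<Rightarrow> real" where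
  "exp_neg_inverse x = (if 0 < x then exp (- 1 / x) else 0)"

lemma borel_measurable_exp_neg_inverse [measurable]: "exp_neg_inverse \<in> borel_measurable borel"
  unfolding exp_neg_inverse_def by measurable

lemma exp_neg_inverse_bounds: "0 \<le> exp_neg_inverse x \<and> exp_neg_inverse x \<le> 1"
  by (auto simp: exp_neg_inverse_def)

lemma exp_neg_inverse_le_iff:
  assumes "0 < x" shows "exp_neg_inverse u \<le> exp_neg_inverse x \<longleftrightarrow> u \<le> x"
  using assms by (cases "0 < u") (auto simp: exp_neg_inverse_def divide_le_cancel field_simps)

lemma exp_neg_inverse_eq_iff:
  assumes "0 < x" shows "exp_neg_inverse u = exp_neg_inverse x \<longleftrightarrow> u = x"
proof
  assume eq: "exp_neg_inverse u = exp_neg_inverse x"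
  then have "0 < u" using assms by (auto simp: exp_neg_inverse_def split: if_splits)
  then show "u = x"
    using eq exp_neg_inverse_le_iff[OF assms, of u] exp_neg_inverse_le_iff[of u x] by auto
qed simp

text \<open>Since \<open>exp_neg_inverse\<close> is strictly increasing on \<open>(0,\<infinity>)\<close>, weak convergence transfers back
  from the images at every continuity point \<open>x > 0\<close>; points \<open>x \<le> 0\<close> are handled by the vanishing
  mass of \<open>{..0}\<close>.\<close>

lemma weak_conv_of_moments_exp_neg_inverse:
  assumes \<nu>: "\<And>n. real_distribution (\<nu> n)" and U: "real_distribution U"
    and nonpos: "(\<lambda>n. measure (\<nu> n) {..0}) \<longlonglongrightarrow> 0" and U_nonpos: "measure U {..0} = 0"
    and moments: "\<And>k. (\<lambda>n. \<integral>x. exp_neg_inverse x ^ k \<partial>\<nu> n) \<longlonglongrightarrow> (\<integral>x. exp_neg_inverse x ^ k \<partial>U)"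
  shows "weak_conv_m \<nu> U"
  unfolding weak_conv_m_def weak_conv_def
proof (intro allI impI)
  fix x assume cont_x: "isCont (cdf U) x"
  interpret U: real_distribution U by (rule U)
  show "(\<lambda>n. cdf (\<nu> n) x) \<longlonglongrightarrow> cdf U x"
  proof (cases "x \<le> 0")
    case True
    have cdf_le: "cdf \<mu> x \<le> measure \<mu> {..0}" if "real_distribution \<mu>" for \<mu>
    proof -
      interpret real_distribution \<mu> by (rule that)
      show ?thesis unfolding cdf_def2 by (rule finite_measure_mono) (use True in auto)
    qed
    have "cdf U x = 0" using cdf_le[OF U] U_nonpos U.cdf_nonneg[of x] by simp
    moreover have "(\<lambda>n. cdf (\<nu> n) x) \<longlonglongrightarrow> 0"
      by (rule tendsto_sandwich[OF _ _ tendsto_const nonpos])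
         (simp_all add: cdf_def2 cdf_le[OF \<nu>, unfolded cdf_def2])
    ultimately show ?thesis by simp
  next
    case False
    then have x: "0 < x" by simp
    have cdf_distr: "cdf (distr \<mu> borel exp_neg_inverse) (exp_neg_inverse x) = cdf \<mu> x"
      if "real_distribution \<mu>" for \<mu>
    proof -
      interpret real_distribution \<mu> by (rule that)
      have "exp_neg_inverse -` {..exp_neg_inverse x} = {..x}"
        using exp_neg_inverse_le_iff[OF x] by auto
      then show ?thesis unfolding cdf_def2 by (subst measure_distr) auto
    qed
    interpret Uh: real_distribution "distr U borel exp_neg_inverse" by simp
    have "measure (distr U borel exp_neg_inverse) {exp_neg_inverse x} = measure U {x}"
      using exp_neg_inverse_eq_iff[OF x] by (subst measure_distr) (auto simp: vimage_def)
    then have "isCont (cdf (distr U borel exp_neg_inverse)) (exp_neg_inverse x)"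
      using cont_x U.isCont_cdf Uh.isCont_cdf by simp
    then have "(\<lambda>n. cdf (distr (\<nu> n) borel exp_neg_inverse) (exp_neg_inverse x))
               \<longlonglongrightarrow> cdf (distr U borel exp_neg_inverse) (exp_neg_inverse x)"
      using weak_conv_distr_of_moments[OF \<nu> U borel_measurable_exp_neg_inverse
          exp_neg_inverse_bounds moments]
      unfolding weak_conv_m_def weak_conv_def by blast
    then show ?thesis using cdf_distr[OF \<nu>] cdf_distr[OF U] by simp
  qed
qed

lemma scaled_normal_char_sqrt_eq:
  assumes "0 < k"
  shows "scaled_normal_char (sqrt (2 * real k)) x = exp_neg_inverse x ^ k + indicator {..0} x"
proof (cases "0 < x")
  case True
  then have "scaled_normal_char (sqrt (2 * real k)) x = exp (real k * (- 1 / x))"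
    by (simp add: scaled_normal_char_def)
  also have "\<dots> = exp (- 1 / x) ^ k" by (rule exp_of_nat_mult)
  finally show ?thesis using True by (simp add: exp_neg_inverse_def)
qed (use assms in \<open>simp add: scaled_normal_char_def exp_neg_inverse_def\<close>)

lemma integral_exp_neg_inverse_power:
  assumes \<mu>: "real_distribution \<mu>" and "0 < k"
  shows "(\<integral>x. exp_neg_inverse x ^ k \<partial>\<mu>)
         = (\<integral>x. scaled_normal_char (sqrt (2 * real k)) x \<partial>\<mu>) - measure \<mu> {..0}"
proof -
  interpret real_distribution \<mu> by (rule \<mu>)
  have "(\<integral>x. exp_neg_inverse x ^ k \<partial>\<mu>)
        = (\<integral>x. scaled_normal_char (sqrt (2 * real k)) x - indicator {..0} x \<partial>\<mu>)"
    using scaled_normal_char_sqrt_eq[OF \<open>0 < k\<close>] by simp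
  also have "\<dots> = (\<integral>x. scaled_normal_char (sqrt (2 * real k)) x \<partial>\<mu>) - (\<integral>x. indicator {..0::real} x \<partial>\<mu>)"
    by (intro Bochner_Integration.integral_diff integrable_const_bound[where B=1])
       (auto simp: abs_scaled_normal_char_le_1)
  finally show ?thesis by simp
qed

section \<open>Convergence of normal scale mixtures\<close>

lemma weak_conv_normal_mixture_iff:
  assumes \<nu>: "\<And>n. real_distribution (\<nu> n)" and L: "real_distribution L"
    and char_L: "\<And>t. char L t = complex_of_real (\<phi> t)"
  shows "weak_conv_m (\<lambda>n. normal_mixture (\<nu> n)) L
         \<longleftrightarrow> (\<forall>t. (\<lambda>n. \<integral>u. scaled_normal_char t u \<partial>\<nu> n) \<longlonglongrightarrow> \<phi> t)"
proof -
  have mixture: "real_distribution (normal_mixture (\<nu> n))" for n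
    by (rule real_distribution_normal_mixture[OF \<nu>])
  have char_iff: "(\<lambda>n. char (normal_mixture (\<nu> n)) t) \<longlonglongrightarrow> char L t
        \<longleftrightarrow> (\<lambda>n. \<integral>u. scaled_normal_char t u \<partial>\<nu> n) \<longlonglongrightarrow> \<phi> t" for t
    unfolding char_normal_mixture[OF \<nu>] char_L tendsto_of_real_iff ..
  show ?thesis
  proof (intro iffI allI)
    fix t assume "weak_conv_m (\<lambda>n. normal_mixture (\<nu> n)) L"
    from levy_continuity1[OF mixture L this, of t]
    show "(\<lambda>n. \<integral>u. scaled_normal_char t u \<partial>\<nu> n) \<longlonglongrightarrow> \<phi> t" unfolding char_iff .
  next
    assume chars: "\<forall>t. (\<lambda>n. \<integral>u. scaled_normal_char t u \<partial>\<nu> n) \<longlonglongrightarrow> \<phi> t"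
    show "weak_conv_m (\<lambda>n. normal_mixture (\<nu> n)) L"
    proof (rule levy_continuity[OF mixture L])
      fix t
      from chars show "(\<lambda>n. char (normal_mixture (\<nu> n)) t) \<longlonglongrightarrow> char L t"
        unfolding char_iff by blast
    qed
  qed
qed

lemma tendsto_integral_scaled_normal_char_iff_weak_conv:
  assumes \<nu>: "\<And>n. real_distribution (\<nu> n)" and U: "real_distribution U"
    and nonpos: "(\<lambda>n. measure (\<nu> n) {..0}) \<longlonglongrightarrow> 0" and U_nonpos: "measure U {..0} = 0"
  shows "(\<forall>t. (\<lambda>n. \<integral>u. scaled_normal_char t u \<partial>\<nu> n) \<longlonglongrightarrow> (\<integral>u. scaled_normal_char t u \<partial>U))
         \<longleftrightarrow> weak_conv_m \<nu> U"
proof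
  assume chars: "\<forall>t. (\<lambda>n. \<integral>u. scaled_normal_char t u \<partial>\<nu> n) \<longlonglongrightarrow> (\<integral>u. scaled_normal_char t u \<partial>U)"
  show "weak_conv_m \<nu> U"
  proof (rule weak_conv_of_moments_exp_neg_inverse[OF \<nu> U nonpos U_nonpos])
    fix k :: nat
    show "(\<lambda>n. \<integral>x. exp_neg_inverse x ^ k \<partial>\<nu> n) \<longlonglongrightarrow> (\<integral>x. exp_neg_inverse x ^ k \<partial>U)"
    proof (cases "k = 0")
      case True
      have "(\<integral>x. exp_neg_inverse x ^ k \<partial>\<mu>) = 1" if "real_distribution \<mu>" for \<mu>
      proof -
        interpret real_distribution \<mu> by (rule that)
        show ?thesis using True prob_space by simp
      qed
      then show ?thesis using \<nu> U by simp
    next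
      case False
      then have "0 < k" by simp
      have "(\<lambda>n. (\<integral>x. scaled_normal_char (sqrt (2 * real k)) x \<partial>\<nu> n) - measure (\<nu> n) {..0})
            \<longlonglongrightarrow> (\<integral>x. scaled_normal_char (sqrt (2 * real k)) x \<partial>U) - 0"
        using chars by (intro tendsto_diff nonpos) auto
      then show ?thesis
        unfolding integral_exp_neg_inverse_power[OF \<nu> \<open>0 < k\<close>]
          integral_exp_neg_inverse_power[OF U \<open>0 < k\<close>] U_nonpos by simp
    qed
  qed
next
  assume "weak_conv_m \<nu> U"
  interpret U: real_distribution U by (rule U)
  have "measure U {0} = 0"
    using U.finite_measure_mono[of "{0}" "{..0}"] U_nonpos measure_nonneg[of U "{0}"] by simp
  then have discont_null: "emeasure U {u. \<not> isCont (scaled_normal_char t) u} = 0" for t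
    using isCont_scaled_normal_char emeasure_mono[of "{u. \<not> isCont (scaled_normal_char t) u}" "{0}" U]
    by (auto simp: U.emeasure_eq_measure)
  show "\<forall>t. (\<lambda>n. \<integral>u. scaled_normal_char t u \<partial>\<nu> n) \<longlonglongrightarrow> (\<integral>u. scaled_normal_char t u \<partial>U)"
    by (intro allI weak_conv_imp_bdd_ae_continuous_conv[OF \<nu> U \<open>weak_conv_m \<nu> U\<close>, where B=1]
        discont_null) (auto simp: abs_scaled_normal_char_le_1)
qed

theorem theorem8:
  fixes M :: "'a measure"
    and X :: "nat \<Rightarrow> 'a \<Rightarrow> real"
    and N :: "nat \<Rightarrow> 'a \<Rightarrow> nat"
    and T :: "nat \<Rightarrow> (nat \<Rightarrow> real) \<Rightarrow> real"
    and \<alpha> \<nu> \<sigma> \<theta> :: real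
    and L G :: "real measure"
  assumes "prob_space M"
    and "0 < \<alpha>" "\<alpha> \<le> 2" "0 < \<nu>"
    and "\<And>i. X i \<in> borel_measurable M"
    and "\<And>n. N n \<in> measurable M (count_space UNIV)"
    and "\<And>n. prob_space.indep_set M
                 {N n -` A \<inter> space M | A. A \<in> sets (count_space UNIV)}
                 {(\<lambda>\<omega> i. X i \<omega>) -` B \<inter> space M | B. B \<in> sets (PiM UNIV (\<lambda>_::nat. borel))}"
    and "\<And>K. (\<lambda>n. measure M {\<omega> \<in> space M. N n \<omega> \<le> K}) \<longlonglongrightarrow> 0"
    and "\<And>n. T n \<in> borel_measurable (PiM {1..n} (\<lambda>_. borel))"
    and "0 < \<sigma>"
    and "\<And>x. (\<lambda>n. measure M {\<omega> \<in> space M.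
              \<sigma> * sqrt (real n) * (T n (restrict (\<lambda>i. X i \<omega>) {1..n}) - \<theta>) < x})
            \<longlonglongrightarrow> std_normal_cdf x"
    and "is_linnik_law \<alpha> \<nu> L"
    and "is_gml_law (\<alpha> / 2) \<nu> G"
  shows "weak_conv_m
           (\<lambda>n. distr M borel (\<lambda>\<omega>. \<sigma> * sqrt (real n) *
              (T (N n \<omega>) (restrict (\<lambda>i. X i \<omega>) {1..N n \<omega>}) - \<theta>)))
           L
         \<longleftrightarrow>
         weak_conv_m
           (\<lambda>n. distr M borel (\<lambda>\<omega>. real (N n \<omega>) / real n))
           (distr G borel (\<lambda>m. 1 / (2 * m)))"
proof -
  interpret random_index_statistic M X N T \<sigma> \<theta>
    using assms(1,5-9,11) by (simp add: random_index_statistic_def random_index_statistic_axioms_def)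
  let ?\<nu> = "\<lambda>n. distr M borel (index_ratio n)"
  let ?U = "distr G borel (\<lambda>m. 1 / (2 * m))"
  have gml: "0 < \<alpha> / 2" "is_gml_law (\<alpha> / 2) \<nu> G" using assms(2,13) by simp_all
  have index_ratio: "real_distribution (?\<nu> n)" for n
    using borel_measurable_index_ratio by simp
  have U: "real_distribution ?U"
  proof -
    interpret G: real_distribution G using gml(2) by (simp add: is_gml_law_def)
    show ?thesis by simp
  qed
  have L: "real_distribution L" "char L t = complex_of_real ((1 + \<bar>t\<bar> powr \<alpha>) powr (- \<nu>))" for t
    using assms(12) by (simp_all add: is_linnik_law_def)
  have "weak_conv_m (\<lambda>n. distr M borel (random_stat n)) L
        \<longleftrightarrow> weak_conv_m (\<lambda>n. normal_mixture (?\<nu> n)) L"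
    by (rule weak_conv_random_stat_iff_normal_mixture)
  also have "\<dots> \<longleftrightarrow> (\<forall>t. (\<lambda>n. \<integral>u. scaled_normal_char t u \<partial>?\<nu> n) \<longlonglongrightarrow> (1 + \<bar>t\<bar> powr \<alpha>) powr (- \<nu>))"
    by (rule weak_conv_normal_mixture_iff[OF index_ratio L])
  also have "\<dots> \<longleftrightarrow> (\<forall>t. (\<lambda>n. \<integral>u. scaled_normal_char t u \<partial>?\<nu> n)
                          \<longlonglongrightarrow> (\<integral>u. scaled_normal_char t u \<partial>?U))"
    using integral_scaled_normal_char_reciprocal_gml[OF gml(2,1) assms(4)] by simp
  also have "\<dots> \<longleftrightarrow> weak_conv_m ?\<nu> ?U"
    by (rule tendsto_integral_scaled_normal_char_iff_weak_conv[OF index_ratio U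
          index_ratio_nonpos_tendsto measure_reciprocal_gml_nonpos[OF gml(2,1) assms(4)]])
  finally show ?thesis
    by (simp add: random_stat_def[abs_def] normalized_stat_def sample_def index_ratio_def[abs_def])
qed

end
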